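(* Let $G$ be a directed graph with vertex set $V=\{1,\dots,n\}$, let $\Delta<n$ be a positive integer and let $i\ge 1$ be an integer. Let $V'=\{x':x\in V\}$ and $V''=\{x'':x\in V\}$ be two disjoint copies of $V$, and let $G_i$ be the graph with vertex set $V\cup V'\cup V''$ and edge set consisting of: $xy$ and $x'y''$ for every $xy\in E(G)$, and $xx'$ for every $x\in V$ with $x\in[(i-1)\Delta+1,\,i\Delta]$. Then for any $u,v\in V$ with $u\neq v$, a $u\to v''$ path exists in $G_i$ if and only if there exists a $u\to v$ path $P$ in $G$ whose last edge $yv$ satisfies $y\in[(i-1)\Delta+1,\,i\Delta]$. *)

theory Defs
  imports Main
begin

text \<open>Vertices of the auxiliary graph G_i: V, V' and V'' as three tagged copies of nat.\<close>
datatype vtx = Orig nat | Prime nat | DPrime nat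

definition is_path :: "('a \<times> 'a) set \<Rightarrow> 'a list \<Rightarrow> 'a \<Rightarrow> 'a \<Rightarrow> bool" where
  "is_path E ps u v \<longleftrightarrow> ps \<noteq> [] \<and> hd ps = u \<and> last ps = v \<and>
     (\<forall>k. Suc k < length ps \<longrightarrow> (ps ! k, ps ! Suc k) \<in> E)"

definition Gi_edges :: "nat \<Rightarrow> (nat \<times> nat) set \<Rightarrow> nat \<Rightarrow> nat \<Rightarrow> (vtx \<times> vtx) set" where
  "Gi_edges n E \<Delta> i =
     {(Orig x, Orig y) | x y. (x, y) \<in> E} \<union>
     {(Prime x, DPrime y) | x y. (x, y) \<in> E} \<union>
     {(Orig x, Prime x) | x. x \<in> {1..n} \<and> x \<in> {(i - 1) * \<Delta> + 1 .. i * \<Delta>}}"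

end

theory Submission
  imports Defs
begin

text \<open>A path from u to v'' in G_i must stay in the copy V up to some vertex y, cross to y' (so y
  lies in the window), and then take one edge y'v'' coming from an edge yv of G, after which it
  is stuck. Conversely such a route through G_i is read off any u-v path of G whose penultimate
  vertex lies in the window. With paths replaced by the reflexive transitive closure, this is a
  layer-by-layer description of the set reachable from u in G_i.\<close>

lemma is_path_snoc:
  assumes "ps \<noteq> []"
  shows "is_path E (ps @ [y]) u v \<longleftrightarrow> is_path E ps u (last ps) \<and> (last ps, y) \<in> E \<and> v = y"
proof -
  have edge_iff: "(\<forall>k. Suc k < length (ps @ [y]) \<longrightarrow> ((ps @ [y]) ! k, (ps @ [y]) ! Suc k) \<in> E)
      \<longleftrightarrow> (\<forall>k. Suc k < length ps \<longrightarrow> (ps ! k, ps ! Suc k) \<in> E) \<and> (last ps, y) \<in> E"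
    (is "(\<forall>k. ?steps k) \<longleftrightarrow> (\<forall>k. ?init k) \<and> ?last")
  proof -
    have "?steps k \<longleftrightarrow> ?init k \<and> (Suc k = length ps \<longrightarrow> ?last)" for k
      using assms by (auto simp: nth_append last_conv_nth less_Suc_eq dest: sym)
    moreover have "\<exists>k. Suc k = length ps"
      using assms by (cases ps) auto
    ultimately show ?thesis
      by auto
  qed
  show ?thesis
    using assms unfolding is_path_def edge_iff by auto
qed

lemma is_path_iff_rtrancl: "(\<exists>ps. is_path E ps u v) \<longleftrightarrow> (u, v) \<in> E\<^sup>*"
proof
  assume "\<exists>ps. is_path E ps u v"
  then obtain ps where "is_path E ps u v" ..
  then show "(u, v) \<in> E\<^sup>*"
  proof (induction ps arbitrary: v rule: rev_induct)
    case Nil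
    then show ?case by (simp add: is_path_def)
  next
    case (snoc y ps)
    show ?case
    proof (cases "ps = []")
      case True
      then show ?thesis using snoc.prems by (auto simp: is_path_def)
    next
      case False
      with snoc.prems have "is_path E ps u (last ps)" "(last ps, y) \<in> E" "v = y"
        by (simp_all add: is_path_snoc)
      with snoc.IH show ?thesis by (blast intro: rtrancl_into_rtrancl)
    qed
  qed
next
  assume "(u, v) \<in> E\<^sup>*"
  then show "\<exists>ps. is_path E ps u v"
  proof (induction rule: rtrancl_induct)
    case base
    have "is_path E [u] u u" by (simp add: is_path_def)
    then show ?case ..
  next
    case (step y z)
    then obtain ps where ps: "is_path E ps u y" by blast
    then have "ps \<noteq> []" "last ps = y" by (simp_all add: is_path_def)
    with ps step.hyps(2) have "is_path E (ps @ [z]) u z" by (simp add: is_path_snoc)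
    then show ?case ..
  qed
qed

lemma is_path_last_edge_iff:
  "(\<exists>ps. is_path E ps u v \<and> 2 \<le> length ps \<and> P (ps ! (length ps - 2))) \<longleftrightarrow>
   (\<exists>y. P y \<and> (u, y) \<in> E\<^sup>* \<and> (y, v) \<in> E)"
proof
  assume "\<exists>ps. is_path E ps u v \<and> 2 \<le> length ps \<and> P (ps ! (length ps - 2))"
  then obtain ps where ps: "is_path E ps u v" and len: "2 \<le> length ps"
    and P: "P (ps ! (length ps - 2))" by blast
  define qs where "qs = butlast ps"
  have "ps \<noteq> []" "last ps = v"
    using ps by (simp_all add: is_path_def)
  then have ps_snoc: "ps = qs @ [v]"
    unfolding qs_def by (metis append_butlast_last_id)
  have qs: "qs \<noteq> []"
    using len by (simp add: qs_def flip: length_greater_0_conv)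
  have "ps ! (length ps - 2) = last qs"
    using ps_snoc qs by (simp add: nth_append last_conv_nth)
  moreover have "is_path E qs u (last qs)" "(last qs, v) \<in> E"
    using ps ps_snoc qs by (simp_all add: is_path_snoc)
  ultimately show "\<exists>y. P y \<and> (u, y) \<in> E\<^sup>* \<and> (y, v) \<in> E"
    using P is_path_iff_rtrancl by metis
next
  assume "\<exists>y. P y \<and> (u, y) \<in> E\<^sup>* \<and> (y, v) \<in> E"
  then obtain y qs where "P y" "(y, v) \<in> E" and qs: "is_path E qs u y"
    using is_path_iff_rtrancl by metis
  moreover have "qs \<noteq> []" "last qs = y"
    using qs by (simp_all add: is_path_def)
  ultimately have "is_path E (qs @ [v]) u v" "P ((qs @ [v]) ! (length (qs @ [v]) - 2))"
    by (simp_all add: is_path_snoc nth_append last_conv_nth)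
  moreover have "2 \<le> length (qs @ [v])"
    using \<open>qs \<noteq> []\<close> by (cases qs) simp_all
  ultimately show "\<exists>ps. is_path E ps u v \<and> 2 \<le> length ps \<and> P (ps ! (length ps - 2))"
    by blast
qed

lemma Orig_rtrancl_Gi_edges:
  assumes "(a, b) \<in> E\<^sup>*"
  shows "(Orig a, Orig b) \<in> (Gi_edges n E \<Delta> i)\<^sup>*"
  using assms
  by (induction rule: rtrancl_induct) (auto simp: Gi_edges_def intro: rtrancl_into_rtrancl)

lemma rtrancl_Gi_edges_from_Orig:
  "(Orig a, t) \<in> (Gi_edges n E \<Delta> i)\<^sup>* \<longleftrightarrow>
     (case t of
        Orig b \<Rightarrow> (a, b) \<in> E\<^sup>*
      | Prime b \<Rightarrow> b \<in> {1..n} \<and> b \<in> {(i - 1) * \<Delta> + 1 .. i * \<Delta>} \<and> (a, b) \<in> E\<^sup>*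
      | DPrime b \<Rightarrow> (\<exists>y \<in> {1..n}. y \<in> {(i - 1) * \<Delta> + 1 .. i * \<Delta>} \<and>
                      (a, y) \<in> E\<^sup>* \<and> (y, b) \<in> E))"
  (is "?reach t \<longleftrightarrow> ?layer t")
proof
  assume "?reach t"
  then show "?layer t"
  proof (induction rule: rtrancl_induct)
    case base
    then show ?case by simp
  next
    case (step s t)
    from step.hyps(2) consider
        (Orig_Orig) x y where "s = Orig x" "t = Orig y" "(x, y) \<in> E"
      | (Orig_Prime) x where "s = Orig x" "t = Prime x" "x \<in> {1..n}"
          "x \<in> {(i - 1) * \<Delta> + 1 .. i * \<Delta>}"
      | (Prime_DPrime) x y where "s = Prime x" "t = DPrime y" "(x, y) \<in> E"
      unfolding Gi_edges_def by blast
    then show ?case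
    proof cases
      case Orig_Orig
      with step.IH show ?thesis by (simp add: rtrancl_into_rtrancl)
    next
      case Orig_Prime
      with step.IH show ?thesis by simp
    next
      case Prime_DPrime
      with step.IH show ?thesis by auto
    qed
  qed
next
  assume "?layer t"
  then show "?reach t"
  proof (cases t)
    case (Orig b)
    with \<open>?layer t\<close> show ?thesis by (simp add: Orig_rtrancl_Gi_edges)
  next
    case (Prime b)
    with \<open>?layer t\<close> have "(Orig a, Orig b) \<in> (Gi_edges n E \<Delta> i)\<^sup>*"
      "(Orig b, Prime b) \<in> Gi_edges n E \<Delta> i"
      by (simp_all add: Orig_rtrancl_Gi_edges) (simp add: Gi_edges_def)
    with Prime show ?thesis by (meson rtrancl_into_rtrancl)
  next
    case (DPrime b)
    with \<open>?layer t\<close> obtain y where "y \<in> {1..n}" "y \<in> {(i - 1) * \<Delta> + 1 .. i * \<Delta>}"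
      "(a, y) \<in> E\<^sup>*" "(y, b) \<in> E" by auto
    then have "(Orig a, Orig y) \<in> (Gi_edges n E \<Delta> i)\<^sup>*"
      "(Orig y, Prime y) \<in> Gi_edges n E \<Delta> i" "(Prime y, DPrime b) \<in> Gi_edges n E \<Delta> i"
      by (simp_all add: Orig_rtrancl_Gi_edges) (simp_all add: Gi_edges_def)
    with DPrime show ?thesis by (meson rtrancl_into_rtrancl)
  qed
qed

text \<open>Only the hypothesis that E lives on {1..n} is needed: it puts the penultimate vertex of
  a path into {1..n}, as the crossing edges of G_i require.\<close>

theorem lemma6:
  fixes n \<Delta> i :: nat and E :: "(nat \<times> nat) set" and u v :: nat
  assumes "E \<subseteq> {1..n} \<times> {1..n}"
    and "0 < \<Delta>" and "\<Delta> < n" and "1 \<le> i"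
    and "u \<in> {1..n}" and "v \<in> {1..n}" and "u \<noteq> v"
  shows "(\<exists>ps. is_path (Gi_edges n E \<Delta> i) ps (Orig u) (DPrime v)) \<longleftrightarrow>
         (\<exists>ps. is_path E ps u v \<and> 2 \<le> length ps \<and>
               ps ! (length ps - 2) \<in> {(i - 1) * \<Delta> + 1 .. i * \<Delta>})"
proof -
  have "(\<exists>ps. is_path (Gi_edges n E \<Delta> i) ps (Orig u) (DPrime v)) \<longleftrightarrow>
        (\<exists>y \<in> {1..n}. y \<in> {(i - 1) * \<Delta> + 1 .. i * \<Delta>} \<and> (u, y) \<in> E\<^sup>* \<and> (y, v) \<in> E)"
    by (simp add: is_path_iff_rtrancl rtrancl_Gi_edges_from_Orig)
  also have "\<dots> \<longleftrightarrow> (\<exists>y. y \<in> {(i - 1) * \<Delta> + 1 .. i * \<Delta>} \<and> (u, y) \<in> E\<^sup>* \<and> (y, v) \<in> E)"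
    using assms(1) by blast
  also have "\<dots> \<longleftrightarrow> (\<exists>ps. is_path E ps u v \<and> 2 \<le> length ps \<and>
                         ps ! (length ps - 2) \<in> {(i - 1) * \<Delta> + 1 .. i * \<Delta>})"
    by (rule is_path_last_edge_iff [symmetric])
  finally show ?thesis .
qed

end
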